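(* Up to homeomorphism, the Sorgenfrey line is the unique Hausdorff topological space that has a Sorgenfrey base which is locally strict and has strict branches.
   Context: The Sorgenfrey line is $\mathbb R$ with the topology generated by $\{[a,b)\}$. Notation: ${}^{<\omega}\omega$, ${}^\omega\omega$ finite/infinite sequences of naturals; $a^\frown k$ extends $a$ by $k$; $a\triangleleft b$ iff there is $n$ in both domains with $a\upharpoonright n=b\upharpoonright n$ and $a(n)<b(n)$. A Souslin scheme on $X$ is a family $\mathbf V=\langle V_a\rangle_{a\in{}^{<\omega}\omega}$ of subsets of $X$; $\mathrm{fruit}(\mathbf V,p)=\bigcap_nV_{p\upharpoonright n}$; covering: $V_{\langle\rangle}=X$ and $V_a=\bigcup_nV_{a^\frown n}$; complete: all fruits nonempty; open: all $V_a$ open; has strict branches: every fruit is a singleton; locally strict: $V_a=\bigcup_nV_{a^\frown n}$ and $V_{a^\frown m}\cap V_{a^\frown k}=\emptyset$ for all $a$ and $m\ne k$. $\mathrm{branches}(\mathbf V,x)=\{q: x\in\mathrm{fruit}(\mathbf V,q)\}$; $\mathrm{rsequences}(q,n)=\{p:q\triangleleft p,\ q\upharpoonright n=p\upharpoonright n\}$; $\mathrm{cut}(\mathbf V,q,n)=\bigcup\{\mathrm{fruit}(\mathbf V,p):p\in\mathrm{rsequences}(q,n)\}$. A branch $q$ of $x$ is a $\tau$-base branch of $x$ if $\{\mathrm{cut}(\mathbf V,q,m)\cup\{x\}:m\in\omega\}$ is an open neighborhood base at $x$; $\mathrm{BB}(\mathbf V,x,\tau)$ is the set of these. A Sorgenfrey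 base for a Hausdorff $\langle X,\tau\rangle$ is an open complete covering Souslin scheme with (S1) for all $x$, $q\in\mathrm{branches}(\mathbf V,x)$, $n$, some $t\in\mathrm{BB}(\mathbf V,x,\tau)$ has $t\upharpoonright n=q\upharpoonright n$; (S2) every $q\in{}^\omega\omega$ lies in $\mathrm{BB}(\mathbf V,z,\tau)$ for some $z$. *)

theory Defs
  imports "HOL-Analysis.Analysis"
begin

type_synonym 'a souslin_scheme = "nat list \<Rightarrow> 'a set"

definition sorgenfrey_line :: "real topology" where
  "sorgenfrey_line = topology_generated_by {{a..<b} | a b. True}"

definition restr :: "(nat \<Rightarrow> nat) \<Rightarrow> nat \<Rightarrow> nat list" where
  "restr p n = map p [0..<n]"

definition lex_less :: "(nat \<Rightarrow> nat) \<Rightarrow> (nat \<Rightarrow> nat) \<Rightarrow> bool" where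
  "lex_less a b \<longleftrightarrow> (\<exists>n. restr a n = restr b n \<and> a n < b n)"

definition fruit :: "'a souslin_scheme \<Rightarrow> (nat \<Rightarrow> nat) \<Rightarrow> 'a set" where
  "fruit V p = (\<Inter>n. V (restr p n))"

definition covering_scheme :: "'a topology \<Rightarrow> 'a souslin_scheme \<Rightarrow> bool" where
  "covering_scheme X V \<longleftrightarrow> V [] = topspace X \<and> (\<forall>a. V a = (\<Union>n. V (a @ [n])))"

definition complete_scheme :: "'a souslin_scheme \<Rightarrow> bool" where
  "complete_scheme V \<longleftrightarrow> (\<forall>p. fruit V p \<noteq> {})"

definition open_scheme :: "'a topology \<Rightarrow> 'a souslin_scheme \<Rightarrow> bool" where
  "open_scheme X V \<longleftrightarrow> (\<forall>a. openin X (V a))"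

definition strict_branches :: "'a souslin_scheme \<Rightarrow> bool" where
  "strict_branches V \<longleftrightarrow> (\<forall>p. \<exists>x. fruit V p = {x})"

definition locally_strict :: "'a souslin_scheme \<Rightarrow> bool" where
  "locally_strict V \<longleftrightarrow> (\<forall>a. V a = (\<Union>n. V (a @ [n])) \<and>
      (\<forall>m k. m \<noteq> k \<longrightarrow> V (a @ [m]) \<inter> V (a @ [k]) = {}))"

definition branches :: "'a souslin_scheme \<Rightarrow> 'a \<Rightarrow> (nat \<Rightarrow> nat) set" where
  "branches V x = {q. x \<in> fruit V q}"

definition rsequences :: "(nat \<Rightarrow> nat) \<Rightarrow> nat \<Rightarrow> (nat \<Rightarrow> nat) set" where
  "rsequences q n = {p. lex_less q p \<and> restr q n = restr p n}"

definition cut :: "'a souslin_scheme \<Rightarrow> (nat \<Rightarrow> nat) \<Rightarrow> nat \<Rightarrow> 'a set" where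
  "cut V q n = (\<Union>p \<in> rsequences q n. fruit V p)"

definition BB :: "'a souslin_scheme \<Rightarrow> 'a \<Rightarrow> 'a topology \<Rightarrow> (nat \<Rightarrow> nat) set" where
  "BB V x X = {q. q \<in> branches V x \<and>
      (\<forall>m. openin X (cut V q m \<union> {x})) \<and>
      (\<forall>U. openin X U \<and> x \<in> U \<longrightarrow> (\<exists>m. cut V q m \<union> {x} \<subseteq> U))}"

definition sorgenfrey_base :: "'a topology \<Rightarrow> 'a souslin_scheme \<Rightarrow> bool" where
  "sorgenfrey_base X V \<longleftrightarrow> open_scheme X V \<and> complete_scheme V \<and> covering_scheme X V \<and>
     (\<forall>x q n. q \<in> branches V x \<longrightarrow> (\<exists>t \<in> BB V x X. restr t n = restr q n)) \<and>
     (\<forall>q. \<exists>z. q \<in> BB V z X)"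

end

theory Submission
  imports Defs "HOL-Library.Nat_Bijection"
begin

text \<open>In a locally strict Souslin scheme with strict branches every point lies on exactly one
  branch, and (S1), (S2) say that the cuts of that branch form an open neighbourhood base at
  the point. So the space is homeomorphic to Baire space \<open>\<nat>\<^sup>\<nat>\<close> topologised by the basic
  neighbourhoods \<open>{q} \<union> rsequences q m\<close> of \<open>q\<close>; conversely the cylinders of Baire space,
  transported along a homeomorphism, form such a scheme. Finally this space is the Sorgenfrey
  line: send \<open>q\<close> to the real whose integer part is enumerated by \<open>q 0\<close> and whose fractional
  part has binary expansion \<open>1\<^bsup>q 1\<^esup> 0 1\<^bsup>q 2\<^esup> 0 \<dots>\<close>. On each cylinder of length one this
  is an order isomorphism onto \<open>[n, n + 1)\<close>, so it carries the basic neighbourhoods to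
  half-open intervals.\<close>

subsection \<open>Sequences and the lexicographic order\<close>

lemma restr_eq_iff: "restr p n = restr q n \<longleftrightarrow> (\<forall>i<n. p i = q i)"
  by (auto simp: restr_def map_eq_conv)

lemma restr_Suc: "restr p (Suc n) = restr p n @ [p n]"
  by (simp add: restr_def)

lemma length_restr [simp]: "length (restr p n) = n"
  by (simp add: restr_def)

lemma lex_less_iff: "lex_less a b \<longleftrightarrow> (\<exists>n. (\<forall>i<n. a i = b i) \<and> a n < b n)"
  by (simp add: lex_less_def restr_eq_iff)

lemma first_difference:
  fixes p q :: "nat \<Rightarrow> 'a"
  assumes "p \<noteq> q"
  obtains n where "\<forall>i<n. p i = q i" "p n \<noteq> q n"
proof -
  from assms have ex: "\<exists>n. p n \<noteq> q n" by auto
  show ?thesis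
    by (rule that[of "LEAST n. p n \<noteq> q n"])
      (use LeastI_ex[of "\<lambda>n. p n \<noteq> q n", OF ex] not_less_Least in auto)
qed

lemma lex_less_asym: "lex_less a b \<Longrightarrow> \<not> lex_less b a"
  unfolding lex_less_iff by (metis less_asym linorder_neqE_nat)

lemma lex_less_trans:
  assumes "lex_less a b" "lex_less b c"
  shows "lex_less a c"
proof -
  obtain n where n: "\<forall>i<n. a i = b i" "a n < b n" using assms(1) unfolding lex_less_iff by blast
  obtain m where m: "\<forall>i<m. b i = c i" "b m < c m" using assms(2) unfolding lex_less_iff by blast
  have "(\<forall>i<min n m. a i = c i) \<and> a (min n m) < c (min n m)"
    using n m by (cases n m rule: linorder_cases) auto
  then show ?thesis unfolding lex_less_iff by blast
qed

lemma lex_less_total: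
  assumes "a \<noteq> b"
  shows "lex_less a b \<or> lex_less b a"
proof -
  obtain n where "\<forall>i<n. a i = b i" "a n \<noteq> b n" using assms by (rule first_difference)
  then show ?thesis unfolding lex_less_iff by (metis linorder_neqE_nat)
qed

subsection \<open>Baire space with the lexicographic Sorgenfrey topology\<close>

definition lex_nbhd :: "(nat \<Rightarrow> nat) \<Rightarrow> nat \<Rightarrow> (nat \<Rightarrow> nat) set" where
  "lex_nbhd q m = insert q (rsequences q m)"

lemma mem_lex_nbhd_iff:
  "p \<in> lex_nbhd q m \<longleftrightarrow> (p = q \<or> lex_less q p) \<and> restr p m = restr q m"
  by (auto simp: lex_nbhd_def rsequences_def)

lemma self_mem_lex_nbhd: "q \<in> lex_nbhd q m"
  by (simp add: lex_nbhd_def)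

lemma lex_nbhd_antimono: "m \<le> m' \<Longrightarrow> lex_nbhd q m' \<subseteq> lex_nbhd q m"
  by (auto simp: mem_lex_nbhd_iff restr_eq_iff)

lemma lex_nbhd_subset: "p \<in> lex_nbhd q m \<Longrightarrow> lex_nbhd p m \<subseteq> lex_nbhd q m"
  by (auto simp: mem_lex_nbhd_iff intro: lex_less_trans)

definition lex_sorgenfrey :: "(nat \<Rightarrow> nat) topology" where
  "lex_sorgenfrey = topology (\<lambda>U. \<forall>q\<in>U. \<exists>m. lex_nbhd q m \<subseteq> U)"

lemma openin_lex_sorgenfrey: "openin lex_sorgenfrey U \<longleftrightarrow> (\<forall>q\<in>U. \<exists>m. lex_nbhd q m \<subseteq> U)"
proof -
  have "istopology (\<lambda>U. \<forall>q\<in>U. \<exists>m. lex_nbhd q m \<subseteq> U)"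
    unfolding istopology_def
  proof (intro conjI allI impI)
    fix S T :: "(nat \<Rightarrow> nat) set"
    assume S: "\<forall>q\<in>S. \<exists>m. lex_nbhd q m \<subseteq> S" and T: "\<forall>q\<in>T. \<exists>m. lex_nbhd q m \<subseteq> T"
    show "\<forall>q\<in>S \<inter> T. \<exists>m. lex_nbhd q m \<subseteq> S \<inter> T"
    proof
      fix q assume "q \<in> S \<inter> T"
      then obtain m m' where "lex_nbhd q m \<subseteq> S" "lex_nbhd q m' \<subseteq> T" using S T by blast
      then have "lex_nbhd q (max m m') \<subseteq> S \<inter> T"
        using lex_nbhd_antimono[of m "max m m'" q] lex_nbhd_antimono[of m' "max m m'" q] by auto
      then show "\<exists>m. lex_nbhd q m \<subseteq> S \<inter> T" ..
    qed
  next
    fix K assume "\<forall>S\<in>K. \<forall>q\<in>S. \<exists>m. lex_nbhd q m \<subseteq> S"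
    then show "\<forall>q\<in>\<Union>K. \<exists>m. lex_nbhd q m \<subseteq> \<Union>K"
      by (metis Union_iff Union_upper order_trans)
  qed
  then show ?thesis unfolding lex_sorgenfrey_def by simp
qed

lemma topspace_lex_sorgenfrey [simp]: "topspace lex_sorgenfrey = UNIV"
  unfolding topspace_def openin_lex_sorgenfrey by blast

lemma openin_lex_nbhd: "openin lex_sorgenfrey (lex_nbhd q m)"
  unfolding openin_lex_sorgenfrey using lex_nbhd_subset by blast

definition image_nbhd_base :: "'a topology \<Rightarrow> ((nat \<Rightarrow> nat) \<Rightarrow> 'a) \<Rightarrow> (nat \<Rightarrow> nat) \<Rightarrow> bool" where
  "image_nbhd_base X \<phi> q \<longleftrightarrow> (\<forall>m. openin X (\<phi> ` lex_nbhd q m)) \<and>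
     (\<forall>U. openin X U \<and> \<phi> q \<in> U \<longrightarrow> (\<exists>m. \<phi> ` lex_nbhd q m \<subseteq> U))"

lemma homeomorphic_map_lex_sorgenfrey_iff:
  "homeomorphic_map lex_sorgenfrey X \<phi> \<longleftrightarrow>
     bij_betw \<phi> UNIV (topspace X) \<and> (\<forall>q. image_nbhd_base X \<phi> q)"
proof
  assume hm: "homeomorphic_map lex_sorgenfrey X \<phi>"
  have "bij_betw \<phi> UNIV (topspace X)"
    using homeomorphic_imp_injective_map[OF hm] homeomorphic_imp_surjective_map[OF hm]
    by (simp add: bij_betw_def)
  moreover have "image_nbhd_base X \<phi> q" for q
    unfolding image_nbhd_base_def
  proof (intro conjI allI impI)
    fix m show "openin X (\<phi> ` lex_nbhd q m)"
      using homeomorphic_imp_open_map[OF hm] openin_lex_nbhd by (auto simp: open_map_def)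
  next
    fix U assume "openin X U \<and> \<phi> q \<in> U"
    then have "openin lex_sorgenfrey {p. \<phi> p \<in> U}" "q \<in> {p. \<phi> p \<in> U}"
      using homeomorphic_imp_continuous_map[OF hm] by (auto simp: continuous_map_def)
    then show "\<exists>m. \<phi> ` lex_nbhd q m \<subseteq> U"
      unfolding openin_lex_sorgenfrey by blast
  qed
  ultimately show "bij_betw \<phi> UNIV (topspace X) \<and> (\<forall>q. image_nbhd_base X \<phi> q)" by blast
next
  assume "bij_betw \<phi> UNIV (topspace X) \<and> (\<forall>q. image_nbhd_base X \<phi> q)"
  then have bij: "bij_betw \<phi> UNIV (topspace X)" and base: "\<And>q. image_nbhd_base X \<phi> q"
    by auto
  show "homeomorphic_map lex_sorgenfrey X \<phi>"
  proof (rule bijective_open_imp_homeomorphic_map)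
    show "continuous_map lex_sorgenfrey X \<phi>"
      unfolding continuous_map_def openin_lex_sorgenfrey
    proof (intro conjI allI impI ballI)
      show "\<phi> \<in> topspace lex_sorgenfrey \<rightarrow> topspace X"
        using bij by (auto simp: bij_betw_def)
      fix U q assume "openin X U" "q \<in> {p \<in> topspace lex_sorgenfrey. \<phi> p \<in> U}"
      then obtain m where "\<phi> ` lex_nbhd q m \<subseteq> U"
        using base[of q] unfolding image_nbhd_base_def by blast
      then show "\<exists>m. lex_nbhd q m \<subseteq> {p \<in> topspace lex_sorgenfrey. \<phi> p \<in> U}" by auto
    qed
    show "open_map lex_sorgenfrey X \<phi>"
      unfolding open_map_def
    proof (intro allI impI)
      fix W assume W: "openin lex_sorgenfrey W"
      have "\<exists>T. openin X T \<and> \<phi> q \<in> T \<and> T \<subseteq> \<phi> ` W" if "q \<in> W" for q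
      proof -
        obtain m where m: "lex_nbhd q m \<subseteq> W"
          using W \<open>q \<in> W\<close> unfolding openin_lex_sorgenfrey by blast
        have "openin X (\<phi> ` lex_nbhd q m)" using base[of q] unfolding image_nbhd_base_def by blast
        with m self_mem_lex_nbhd[of q m] show ?thesis by (intro exI[of _ "\<phi> ` lex_nbhd q m"]) auto
      qed
      then show "openin X (\<phi> ` W)" by (subst openin_subopen) force
    qed
  qed (use bij in \<open>auto simp: bij_betw_def\<close>)
qed

subsection \<open>Branches of locally strict Souslin schemes\<close>

lemma fruit_subset: "fruit V p \<subseteq> V (restr p n)"
  unfolding fruit_def by blast

lemma covering_scheme_ex_branch:
  assumes cov: "covering_scheme X V" and x: "x \<in> topspace X"
  shows "\<exists>q. x \<in> fruit V q"
proof -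
  have root: "V [] = topspace X" and split: "\<And>a. V a = (\<Union>n. V (a @ [n]))"
    using cov unfolding covering_scheme_def by blast+
  define next_digit where "next_digit a = (SOME k. x \<in> V (a @ [k]))" for a
  define prefix where "prefix = rec_nat [] (\<lambda>_ a. a @ [next_digit a])"
  have prefix_0: "prefix 0 = []" and prefix_Suc: "prefix (Suc n) = prefix n @ [next_digit (prefix n)]" for n
    by (simp_all add: prefix_def)
  have x_in_prefix: "x \<in> V (prefix n)" for n
  proof (induction n)
    case 0 then show ?case using root x by (simp add: prefix_0)
  next
    case (Suc n)
    then have "\<exists>k. x \<in> V (prefix n @ [k])" using split[of "prefix n"] by blast
    then show ?case unfolding prefix_Suc next_digit_def by (rule someI_ex)
  qed
  define q where "q n = next_digit (prefix n)" for n
  have "restr q n = prefix n" for n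
    by (induction n) (simp_all add: restr_Suc q_def prefix_Suc prefix_0 restr_def[of _ 0])
  then have "x \<in> fruit V q" using x_in_prefix unfolding fruit_def by simp
  then show ?thesis by blast
qed

lemma locally_strict_disjoint:
  assumes "locally_strict V" "m \<noteq> k"
  shows "V (a @ [m]) \<inter> V (a @ [k]) = {}"
  using assms(2) conjunct2[OF assms(1)[unfolded locally_strict_def, THEN spec[of _ a]]] by blast

lemma locally_strict_branch_unique:
  assumes ls: "locally_strict V" and "x \<in> fruit V p" "x \<in> fruit V q"
  shows "p = q"
proof (rule ccontr)
  assume "p \<noteq> q"
  then obtain n where "\<forall>i<n. p i = q i" and pq: "p n \<noteq> q n" by (rule first_difference)
  then have "restr q n = restr p n" by (simp add: restr_eq_iff)
  moreover have "x \<in> V (restr p (Suc n))" "x \<in> V (restr q (Suc n))"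
    using assms(2,3) fruit_subset[of V p "Suc n"] fruit_subset[of V q "Suc n"] by blast+
  ultimately have "x \<in> V (restr p n @ [p n]) \<inter> V (restr p n @ [q n])"
    by (simp add: restr_Suc)
  then show False using locally_strict_disjoint[OF ls pq] by blast
qed

lemma cut_Un_eq_image_lex_nbhd:
  assumes "\<And>p. fruit V p = {\<phi> p}"
  shows "cut V q m \<union> {\<phi> q} = \<phi> ` lex_nbhd q m"
  unfolding cut_def lex_nbhd_def assms by auto

lemma BB_iff_image_nbhd_base:
  assumes "\<And>p. fruit V p = {\<phi> p}"
  shows "q \<in> BB V (\<phi> q) X \<longleftrightarrow> image_nbhd_base X \<phi> q"
  unfolding BB_def mem_Collect_eq branches_def image_nbhd_base_def cut_Un_eq_image_lex_nbhd[OF assms]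
  by (simp add: assms)

lemma lex_sorgenfrey_homeomorphic_space:
  assumes sb: "sorgenfrey_base X V" and ls: "locally_strict V" and st: "strict_branches V"
  shows "lex_sorgenfrey homeomorphic_space X"
proof -
  obtain \<phi> where fruit_eq: "\<And>q. fruit V q = {\<phi> q}"
    using st unfolding strict_branches_def by metis
  have cov: "covering_scheme X V" using sb unfolding sorgenfrey_base_def by blast
  then have root: "V [] = topspace X" unfolding covering_scheme_def by blast
  have "\<phi> q \<in> topspace X" for q
    using fruit_subset[of V q 0] fruit_eq root by (simp add: restr_def)
  moreover have "x \<in> range \<phi>" if x: "x \<in> topspace X" for x
  proof -
    obtain q where "x \<in> fruit V q" using covering_scheme_ex_branch[OF cov x] by blast
    then show ?thesis using fruit_eq by auto
  qed
  moreover have "inj \<phi>"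
  proof (rule injI)
    fix p q assume "\<phi> p = \<phi> q"
    then show "p = q"
      using locally_strict_branch_unique[OF ls, of "\<phi> q" p q] fruit_eq by simp
  qed
  ultimately have "bij_betw \<phi> UNIV (topspace X)"
    by (auto simp: bij_betw_def)
  moreover have "image_nbhd_base X \<phi> q" for q
  proof -
    obtain z where z: "q \<in> BB V z X" using sb unfolding sorgenfrey_base_def by blast
    then have "z = \<phi> q" using fruit_eq by (simp add: BB_def branches_def)
    then show ?thesis using z BB_iff_image_nbhd_base[OF fruit_eq] by simp
  qed
  ultimately show ?thesis
    using homeomorphic_map_imp_homeomorphic_space homeomorphic_map_lex_sorgenfrey_iff by blast
qed

definition cylinder :: "nat list \<Rightarrow> (nat \<Rightarrow> nat) set" where
  "cylinder a = {p. restr p (length a) = a}"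

lemma cylinder_Nil: "cylinder [] = UNIV"
  by (simp add: cylinder_def restr_def)

lemma cylinder_split: "cylinder a = (\<Union>n. cylinder (a @ [n]))"
  by (auto simp: cylinder_def restr_Suc)

lemma cylinder_disjoint: "m \<noteq> k \<Longrightarrow> cylinder (a @ [m]) \<inter> cylinder (a @ [k]) = {}"
  by (auto simp: cylinder_def restr_Suc)

lemma Inter_cylinder_restr: "(\<Inter>n. cylinder (restr p n)) = {p}"
proof
  show "(\<Inter>n. cylinder (restr p n)) \<subseteq> {p}"
  proof
    fix r assume "r \<in> (\<Inter>n. cylinder (restr p n))"
    then have "r n = p n" for n
      using restr_eq_iff[of r "Suc n" p] by (auto simp: cylinder_def)
    then show "r \<in> {p}" by auto
  qed
qed (auto simp: cylinder_def)

lemma openin_cylinder: "openin lex_sorgenfrey (cylinder a)"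
  unfolding openin_lex_sorgenfrey
proof
  fix q assume "q \<in> cylinder a"
  then have "lex_nbhd q (length a) \<subseteq> cylinder a" by (auto simp: cylinder_def mem_lex_nbhd_iff)
  then show "\<exists>m. lex_nbhd q m \<subseteq> cylinder a" ..
qed

lemma homeomorphic_map_imp_sorgenfrey_base:
  assumes hm: "homeomorphic_map lex_sorgenfrey Y H"
  shows "sorgenfrey_base Y (\<lambda>a. H ` cylinder a) \<and> locally_strict (\<lambda>a. H ` cylinder a) \<and>
    strict_branches (\<lambda>a. H ` cylinder a)"
    (is "sorgenfrey_base Y ?V \<and> _")
proof -
  have bij: "bij_betw H UNIV (topspace Y)" and base: "\<And>q. image_nbhd_base Y H q"
    using hm unfolding homeomorphic_map_lex_sorgenfrey_iff by auto
  then have inj: "inj H" by (simp add: bij_betw_def)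
  have fruit_eq: "fruit ?V p = {H p}" for p
  proof -
    have "fruit ?V p = H ` (\<Inter>n. cylinder (restr p n))"
      using inj by (simp add: fruit_def image_INT)
    then show ?thesis by (simp add: Inter_cylinder_restr)
  qed
  have BB: "q \<in> BB ?V (H q) Y" for q
    using base BB_iff_image_nbhd_base[OF fruit_eq] by blast
  have "sorgenfrey_base Y ?V"
    unfolding sorgenfrey_base_def
  proof (intro conjI allI impI)
    show "open_scheme Y ?V"
      using homeomorphic_imp_open_map[OF hm] openin_cylinder
      unfolding open_scheme_def open_map_def by blast
    show "complete_scheme ?V" unfolding complete_scheme_def fruit_eq by simp
    show "covering_scheme Y ?V"
      unfolding covering_scheme_def cylinder_Nil
      using bij cylinder_split by (metis bij_betw_imp_surj_on image_UN)
    fix x q n assume "q \<in> branches ?V x"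
    then show "\<exists>t\<in>BB ?V x Y. restr t n = restr q n"
      using BB by (auto simp: branches_def fruit_eq)
  next
    show "\<exists>z. q \<in> BB ?V z Y" for q using BB by blast
  qed
  moreover have "locally_strict ?V"
    unfolding locally_strict_def
    using cylinder_split cylinder_disjoint inj by (metis image_UN image_Int image_empty)
  moreover have "strict_branches ?V" unfolding strict_branches_def fruit_eq by blast
  ultimately show ?thesis by blast
qed

subsection \<open>The Sorgenfrey line\<close>

lemma openin_sorgenfrey_line: "openin sorgenfrey_line U \<longleftrightarrow> (\<forall>x\<in>U. \<exists>e>0. {x..<x+e} \<subseteq> U)"
proof
  assume "openin sorgenfrey_line U"
  then have "generate_topology_on {{a..<b} | a b. True} U"
    unfolding sorgenfrey_line_def by (rule openin_topology_generated_by)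
  then show "\<forall>x\<in>U. \<exists>e>0. {x..<x+e} \<subseteq> U"
  proof (induction rule: generate_topology_on.induct)
    case (Int a b)
    show ?case
    proof
      fix x assume "x \<in> a \<inter> b"
      then obtain e1 e2 where "e1 > 0" "{x..<x+e1} \<subseteq> a" "e2 > 0" "{x..<x+e2} \<subseteq> b"
        using Int.IH by blast
      moreover have "{x..<x + min e1 e2} \<subseteq> {x..<x+e1} \<inter> {x..<x+e2}" by auto
      ultimately have "min e1 e2 > 0" "{x..<x + min e1 e2} \<subseteq> a \<inter> b" by (simp, blast)
      then show "\<exists>e>0. {x..<x+e} \<subseteq> a \<inter> b" by blast
    qed
  next
    case (UN K)
    then show ?case by (meson Union_iff subset_iff)
  next
    case (Basis s)
    then obtain a b where s: "s = {a..<b}" by blast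
    show ?case
    proof
      fix x assume "x \<in> s"
      then show "\<exists>e>0. {x..<x+e} \<subseteq> s" unfolding s by (intro exI[of _ "b - x"]) auto
    qed
  qed simp
next
  assume U: "\<forall>x\<in>U. \<exists>e>0. {x..<x+e} \<subseteq> U"
  have "U = \<Union>{{a..<b} | a b. {a..<b} \<subseteq> U}"
  proof
    show "U \<subseteq> \<Union>{{a..<b} | a b. {a..<b} \<subseteq> U}"
    proof
      fix x assume "x \<in> U"
      then obtain e where "e > 0" "{x..<x+e} \<subseteq> U" using U by blast
      then show "x \<in> \<Union>{{a..<b} | a b. {a..<b} \<subseteq> U}" by (intro UnionI[of "{x..<x+e}"]) auto
    qed
  qed blast
  moreover have "openin sorgenfrey_line (\<Union>{{a..<b} | a b. {a..<b} \<subseteq> U})"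
    unfolding sorgenfrey_line_def by (rule openin_Union) (auto intro: topology_generated_by_Basis)
  ultimately show "openin sorgenfrey_line U" by simp
qed

lemma openin_sorgenfrey_line_atLeastLessThan: "openin sorgenfrey_line {a..<b}"
  unfolding sorgenfrey_line_def by (rule topology_generated_by_Basis) blast

lemma topspace_sorgenfrey_line [simp]: "topspace sorgenfrey_line = UNIV"
proof -
  have "openin sorgenfrey_line UNIV" unfolding openin_sorgenfrey_line by (auto intro: exI[of _ 1])
  then show ?thesis by (metis openin_subset top.extremum_uniqueI)
qed

lemma Hausdorff_space_sorgenfrey_line: "Hausdorff_space sorgenfrey_line"
  unfolding Hausdorff_space_def
proof (intro allI impI)
  fix x y :: real assume "x \<in> topspace sorgenfrey_line \<and> y \<in> topspace sorgenfrey_line \<and> x \<noteq> y"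
  then consider "x < y" | "y < x" by fastforce
  then show "\<exists>U V. openin sorgenfrey_line U \<and> openin sorgenfrey_line V \<and> x \<in> U \<and> y \<in> V \<and> disjnt U V"
  proof cases
    case 1 then show ?thesis
      by (intro exI[of _ "{x..<y}"] exI[of _ "{y..<y+1}"])
        (auto simp: openin_sorgenfrey_line_atLeastLessThan disjnt_def)
  next
    case 2 then show ?thesis
      by (intro exI[of _ "{x..<x+1}"] exI[of _ "{y..<x}"])
        (auto simp: openin_sorgenfrey_line_atLeastLessThan disjnt_def)
  qed
qed

subsection \<open>Coding Baire space into the reals\<close>

definition seq_tl :: "(nat \<Rightarrow> nat) \<Rightarrow> nat \<Rightarrow> nat" where
  "seq_tl p = (\<lambda>n. p (Suc n))"

definition seq_cons :: "nat \<Rightarrow> (nat \<Rightarrow> nat) \<Rightarrow> nat \<Rightarrow> nat" where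
  "seq_cons k r = (\<lambda>n. case n of 0 \<Rightarrow> k | Suc j \<Rightarrow> r j)"

lemma seq_cons_simps [simp]: "seq_cons k r 0 = k" "seq_tl (seq_cons k r) = r"
  by (auto simp: seq_cons_def seq_tl_def)

lemma seq_cons_hd_tl: "seq_cons (p 0) (seq_tl p) = p"
  by (rule ext) (auto simp: seq_cons_def seq_tl_def split: nat.split)

lemma lex_less_seq_tl_iff:
  assumes "p 0 = q 0"
  shows "lex_less q p \<longleftrightarrow> lex_less (seq_tl q) (seq_tl p)"
proof
  assume "lex_less q p"
  then obtain n where n: "\<forall>i<n. q i = p i" "q n < p n" unfolding lex_less_iff by blast
  then obtain j where "n = Suc j" using assms by (cases n) auto
  then show "lex_less (seq_tl q) (seq_tl p)"
    unfolding lex_less_iff seq_tl_def using n by (intro exI[of _ j]) auto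
next
  assume "lex_less (seq_tl q) (seq_tl p)"
  then obtain n where n: "\<forall>i<n. q (Suc i) = p (Suc i)" "q (Suc n) < p (Suc n)"
    unfolding lex_less_iff seq_tl_def by blast
  then show "lex_less q p"
    unfolding lex_less_iff using assms by (intro exI[of _ "Suc n"]) (auto simp: less_Suc_eq_0_disj)
qed

lemma mem_lex_nbhd_Suc_iff:
  "p \<in> lex_nbhd q (Suc m) \<longleftrightarrow> p 0 = q 0 \<and> seq_tl p \<in> lex_nbhd (seq_tl q) m"
proof -
  have "restr p (Suc m) = restr q (Suc m) \<longleftrightarrow>
      p 0 = q 0 \<and> restr (seq_tl p) m = restr (seq_tl q) m"
    unfolding restr_eq_iff seq_tl_def by (auto simp: less_Suc_eq_0_disj)
  moreover have "p 0 = q 0 \<Longrightarrow> p = q \<longleftrightarrow> seq_tl p = seq_tl q"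
    using seq_cons_hd_tl[of p] seq_cons_hd_tl[of q] by metis
  ultimately show ?thesis unfolding mem_lex_nbhd_iff using lex_less_seq_tl_iff[of p q] by blast
qed

text \<open>The binary expansion of \<open>unit_code p\<close> is \<open>1\<^bsup>p 0\<^esup> 0 1\<^bsup>p 1\<^esup> 0 \<dots>\<close>:
  its zeros sit at the positions \<open>zero_pos p (Suc n)\<close>.\<close>

definition zero_pos :: "(nat \<Rightarrow> nat) \<Rightarrow> nat \<Rightarrow> nat" where
  "zero_pos p n = (\<Sum>i<n. Suc (p i))"

definition unit_code :: "(nat \<Rightarrow> nat) \<Rightarrow> real" where
  "unit_code p = 1 - (\<Sum>n. (1/2) ^ zero_pos p (Suc n))"

lemma zero_pos_Suc: "zero_pos p (Suc n) = Suc (p 0) + zero_pos (seq_tl p) n"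
  unfolding zero_pos_def seq_tl_def by (simp only: sum.lessThan_Suc_shift)

lemma zero_pos_ge: "n \<le> zero_pos p n"
  unfolding zero_pos_def by (induction n) auto

lemma summable_zero_pos: "summable (\<lambda>n. (1/2::real) ^ zero_pos p n)"
proof (rule summable_comparison_test)
  show "\<exists>N. \<forall>n\<ge>N. norm ((1/2::real) ^ zero_pos p n) \<le> (1/2) ^ n"
    using zero_pos_ge by (auto intro!: power_decreasing)
qed simp

lemma summable_zero_pos_Suc: "summable (\<lambda>n. (1/2::real) ^ zero_pos p (Suc n))"
  using summable_zero_pos[of p] summable_ignore_initial_segment[of _ 1] by simp

lemma unit_code_bounds: "0 \<le> unit_code p" "unit_code p < 1"
proof -
  have "(\<Sum>n. (1/2::real) ^ zero_pos p (Suc n)) \<le> (\<Sum>n. (1/2) ^ Suc n)"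
  proof (rule suminf_le)
    show "(1/2::real) ^ zero_pos p (Suc n) \<le> (1/2) ^ Suc n" for n
      by (rule power_decreasing) (use zero_pos_ge in auto)
  qed (use summable_zero_pos_Suc in auto)
  also have "\<dots> = 1"
    using power_half_series sums_unique by fastforce
  finally show "0 \<le> unit_code p" unfolding unit_code_def by simp
  have "0 < (\<Sum>n. (1/2::real) ^ zero_pos p (Suc n))"
    using summable_zero_pos_Suc by (rule suminf_pos) simp
  then show "unit_code p < 1" unfolding unit_code_def by simp
qed

lemma unit_code_rec:
  "unit_code p = 1 - (1/2) ^ p 0 + (1/2) ^ Suc (p 0) * unit_code (seq_tl p)"
proof -
  define S where "S q = (\<Sum>n. (1/2::real) ^ zero_pos q (Suc n))" for q
  let ?c = "(1/2::real) ^ Suc (p 0)"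
  have "S p = (\<Sum>n. ?c * (1/2) ^ zero_pos (seq_tl p) n)"
    unfolding S_def zero_pos_Suc by (simp add: power_add)
  also have "\<dots> = ?c * (\<Sum>n. (1/2::real) ^ zero_pos (seq_tl p) n)"
    using summable_zero_pos by (rule suminf_mult)
  also have "(\<Sum>n. (1/2::real) ^ zero_pos (seq_tl p) n) = 1 + S (seq_tl p)"
    using suminf_split_head[OF summable_zero_pos[of "seq_tl p"]] by (simp add: zero_pos_def S_def)
  finally have "S p = ?c + ?c * S (seq_tl p)" by (simp only: distrib_left mult_1_right)
  moreover have "(1/2::real) ^ p 0 = 2 * ?c" by simp
  moreover have unit_code_eq: "unit_code q = 1 - S q" for q by (simp add: unit_code_def S_def)
  ultimately show ?thesis unfolding unit_code_eq right_diff_distrib mult_1_right by linarith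
qed

lemma unit_code_first_block:
  "1 - (1/2) ^ p 0 \<le> unit_code p" "unit_code p < 1 - (1/2) ^ Suc (p 0)"
proof -
  have c: "(0::real) < (1/2) ^ Suc (p 0)" by simp
  show "1 - (1/2) ^ p 0 \<le> unit_code p"
    using unit_code_rec[of p] unit_code_bounds(1)[of "seq_tl p"] c by simp
  have "(1/2) ^ Suc (p 0) * unit_code (seq_tl p) < (1/2) ^ Suc (p 0)"
    using mult_strict_left_mono[OF unit_code_bounds(2) c] by simp
  moreover have "(1/2::real) ^ p 0 = 2 * (1/2) ^ Suc (p 0)" by simp
  ultimately show "unit_code p < 1 - (1/2) ^ Suc (p 0)" using unit_code_rec[of p] by linarith
qed

lemma unit_code_strict_mono: "lex_less p q \<Longrightarrow> unit_code p < unit_code q"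
proof -
  have "unit_code p < unit_code q" if "\<forall>i<n. p i = q i" "p n < q n" for n p q
    using that
  proof (induction n arbitrary: p q)
    case 0
    then have "(1/2::real) ^ q 0 \<le> (1/2) ^ Suc (p 0)" by (intro power_decreasing) auto
    then show ?case using unit_code_first_block[of p] unit_code_first_block[of q] by linarith
  next
    case (Suc n)
    have "unit_code (seq_tl p) < unit_code (seq_tl q)"
      using Suc.prems by (intro Suc.IH) (auto simp: seq_tl_def)
    moreover have "p 0 = q 0" using Suc.prems by auto
    ultimately show ?case using unit_code_rec[of p] unit_code_rec[of q] by simp
  qed
  then show "lex_less p q \<Longrightarrow> unit_code p < unit_code q" unfolding lex_less_iff by blast
qed

lemma unit_code_less_iff: "unit_code p < unit_code q \<longleftrightarrow> lex_less p q"
  by (metis unit_code_strict_mono lex_less_total less_asym less_irrefl)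

lemma inj_unit_code: "inj unit_code"
  by (rule injI) (metis unit_code_strict_mono lex_less_total less_irrefl)

text \<open>Inverting \<open>unit_code\<close>: \<open>leading_ones x\<close> is the length of the first block of ones of \<open>x\<close>,
  and \<open>shift_block\<close> strips that block together with the zero after it.\<close>

definition leading_ones :: "real \<Rightarrow> nat" where
  "leading_ones x = (LEAST k. x < 1 - (1/2) ^ Suc k)"

definition shift_block :: "real \<Rightarrow> real" where
  "shift_block x = 2 ^ Suc (leading_ones x) * (x - (1 - (1/2) ^ leading_ones x))"

definition unit_decode :: "real \<Rightarrow> nat \<Rightarrow> nat" where
  "unit_decode x n = leading_ones ((shift_block ^^ n) x)"

lemma leading_ones_bounds:
  assumes "0 \<le> x" "x < 1"
  shows "1 - (1/2) ^ leading_ones x \<le> x" "x < 1 - (1/2) ^ Suc (leading_ones x)"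
proof -
  obtain n where "(1/2::real) ^ n < 1 - x" using real_arch_pow_inv[of "1 - x" "1/2"] assms by auto
  moreover have "(1/2::real) ^ Suc n \<le> (1/2) ^ n" by (rule power_decreasing) auto
  ultimately have ex: "\<exists>k. x < 1 - (1/2) ^ Suc k" by (intro exI[of _ n]) linarith
  show "x < 1 - (1/2) ^ Suc (leading_ones x)" unfolding leading_ones_def by (rule LeastI_ex[OF ex])
  show "1 - (1/2) ^ leading_ones x \<le> x"
  proof (cases "leading_ones x")
    case (Suc k)
    then have "\<not> x < 1 - (1/2) ^ Suc k"
      using not_less_Least[of k "\<lambda>k. x < 1 - (1/2) ^ Suc k"] unfolding leading_ones_def by simp
    then show ?thesis unfolding Suc by linarith
  qed (use assms in simp)
qed

lemma shift_block_bounds: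
  assumes "0 \<le> x" "x < 1"
  shows "0 \<le> shift_block x" "shift_block x < 1"
    and "x = 1 - (1/2) ^ leading_ones x + (1/2) ^ Suc (leading_ones x) * shift_block x"
proof -
  let ?k = "Suc (leading_ones x)" and ?d = "x - (1 - (1/2) ^ leading_ones x)"
  have pos: "(0::real) < 2 ^ ?k" by simp
  have inv: "(2::real) ^ ?k * (1/2) ^ ?k = 1" by (simp add: power_mult_distrib[symmetric])
  have d: "0 \<le> ?d" "?d < (1/2) ^ ?k" using leading_ones_bounds[OF assms] by simp_all
  have "0 \<le> 2 ^ ?k * ?d" using d(1) by simp
  moreover have "2 ^ ?k * ?d < 2 ^ ?k * (1/2) ^ ?k" using d(2) pos by (rule mult_strict_left_mono)
  ultimately show "0 \<le> shift_block x" "shift_block x < 1" unfolding shift_block_def inv by simp_all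
  have "(1/2) ^ ?k * shift_block x = ((1/2) ^ ?k * 2 ^ ?k) * ?d"
    unfolding shift_block_def by (simp only: mult.assoc)
  then have "(1/2) ^ ?k * shift_block x = ?d" using inv by (simp only: mult.commute) simp
  then show "x = 1 - (1/2) ^ leading_ones x + (1/2) ^ ?k * shift_block x" by linarith
qed

lemma unit_decode_0: "unit_decode x 0 = leading_ones x"
  by (simp add: unit_decode_def)

lemma seq_tl_unit_decode: "seq_tl (unit_decode x) = unit_decode (shift_block x)"
  unfolding seq_tl_def unit_decode_def by (simp add: funpow_Suc_right del: funpow.simps)

lemma unit_code_unit_decode_approx:
  "0 \<le> x \<Longrightarrow> x < 1 \<Longrightarrow> \<bar>unit_code (unit_decode x) - x\<bar> \<le> (1/2) ^ n"
proof (induction n arbitrary: x)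
  case 0
  then show ?case using unit_code_bounds[of "unit_decode x"] by simp
next
  case (Suc n)
  let ?c = "(1/2::real) ^ Suc (leading_ones x)"
  note shift = shift_block_bounds[OF Suc.prems]
  have "unit_code (unit_decode x) - x = ?c * (unit_code (unit_decode (shift_block x)) - shift_block x)"
    using unit_code_rec[of "unit_decode x"] shift(3)
    by (simp add: unit_decode_0 seq_tl_unit_decode algebra_simps)
  also have "\<bar>\<dots>\<bar> \<le> (1/2) * (1/2) ^ n"
    unfolding abs_mult
    by (rule mult_mono) (use Suc.IH[OF shift(1,2)] in \<open>auto intro: power_decreasing simp: power_le_one\<close>)
  finally show ?case by simp
qed

lemma unit_code_unit_decode: "0 \<le> x \<Longrightarrow> x < 1 \<Longrightarrow> unit_code (unit_decode x) = x"
proof (rule ccontr)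
  assume x: "0 \<le> x" "x < 1" and "unit_code (unit_decode x) \<noteq> x"
  then obtain n where "(1/2::real) ^ n < \<bar>unit_code (unit_decode x) - x\<bar>"
    using real_arch_pow_inv[of _ "1/2::real"] by force
  then show False using unit_code_unit_decode_approx[OF x, of n] by simp
qed

lemma unit_code_mono_lex_nbhd:
  assumes "p \<in> lex_nbhd q m"
  shows "unit_code q \<le> unit_code p"
proof -
  have "p = q \<or> lex_less q p" using assms by (simp add: mem_lex_nbhd_iff)
  then show ?thesis using unit_code_strict_mono[of q p] by auto
qed

lemma unit_code_lex_nbhd_bound:
  assumes "e > 0"
  obtains m where "\<And>p. p \<in> lex_nbhd q m \<Longrightarrow> unit_code p < unit_code q + e"
proof (cases "unit_code q + e < 1")
  case False
  show ?thesis
  proof (rule that[of 0])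
    fix p show "unit_code p < unit_code q + e" using False unit_code_bounds(2)[of p] by linarith
  qed
next
  case True
  define r where "r = unit_decode (unit_code q + e)"
  have r: "unit_code r = unit_code q + e"
    unfolding r_def using True assms unit_code_bounds(1)[of q] by (intro unit_code_unit_decode) auto
  then have "lex_less q r" using assms unit_code_less_iff[of q r] by simp
  then obtain n where n: "\<forall>i<n. q i = r i" "q n < r n" unfolding lex_less_iff by blast
  have "unit_code p < unit_code q + e" if "p \<in> lex_nbhd q (Suc n)" for p
  proof -
    have "\<forall>i<Suc n. p i = q i" using that by (simp add: mem_lex_nbhd_iff restr_eq_iff)
    then have "lex_less p r" unfolding lex_less_iff using n by (intro exI[of _ n]) auto
    then show ?thesis using r unit_code_strict_mono[of p r] by simp
  qed
  then show ?thesis by (rule that)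
qed

lemma unit_code_interval_subset_image:
  "\<exists>e>0. {unit_code q..<unit_code q + e} \<subseteq> unit_code ` lex_nbhd q m"
proof -
  \<comment> \<open>every sequence lexicographically between \<open>q\<close> and \<open>r\<close> agrees with \<open>q\<close> below \<open>m\<close>\<close>
  define r where "r = q(m := Suc (q m))"
  have qr: "lex_less q r" unfolding lex_less_iff r_def by (intro exI[of _ m]) auto
  have "{unit_code q..<unit_code r} \<subseteq> unit_code ` lex_nbhd q m"
  proof
    fix y assume y: "y \<in> {unit_code q..<unit_code r}"
    define p where "p = unit_decode y"
    have "0 \<le> y" "y < 1" using y unit_code_bounds[of q] unit_code_bounds[of r] by auto
    then have p: "unit_code p = y" unfolding p_def by (rule unit_code_unit_decode)
    have pq: "p = q \<or> lex_less q p"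
      using lex_less_total[of q p] unit_code_strict_mono[of p q] p y by fastforce
    have pr: "lex_less p r" using p y unit_code_less_iff by auto
    have "restr p m = restr q m"
    proof (cases "p = q")
      case False
      with pq have "lex_less q p" by simp
      from pr obtain n where n: "\<forall>i<n. p i = r i" "p n < r n" unfolding lex_less_iff by blast
      have "m \<le> n"
      proof (rule ccontr)
        assume "\<not> m \<le> n"
        then have "lex_less p q" unfolding lex_less_iff using n by (intro exI[of _ n]) (auto simp: r_def)
        then show False using \<open>lex_less q p\<close> lex_less_asym by blast
      qed
      then show ?thesis using n by (auto simp: restr_eq_iff r_def)
    qed simp
    then show "y \<in> unit_code ` lex_nbhd q m" using pq p by (auto simp: mem_lex_nbhd_iff)
  qed
  moreover have "unit_code q < unit_code r" using qr by (rule unit_code_strict_mono)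
  ultimately show ?thesis by (intro exI[of _ "unit_code r - unit_code q"]) auto
qed

definition real_code :: "(nat \<Rightarrow> nat) \<Rightarrow> real" where
  "real_code p = of_int (int_decode (p 0)) + unit_code (seq_tl p)"

lemma floor_real_code: "\<lfloor>real_code p\<rfloor> = int_decode (p 0)"
  unfolding real_code_def using unit_code_bounds[of "seq_tl p"] by (intro floor_unique) auto

lemma bij_real_code: "bij real_code"
proof (rule bijI)
  show "inj real_code"
  proof (rule injI)
    fix p q assume eq: "real_code p = real_code q"
    then have "int_decode (p 0) = int_decode (q 0)" using floor_real_code[of p] floor_real_code[of q] by simp
    then have hd: "p 0 = q 0" using inj_int_decode[of UNIV] by (simp add: inj_eq)
    then have "unit_code (seq_tl p) = unit_code (seq_tl q)" using eq by (simp add: real_code_def)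
    then have "seq_tl p = seq_tl q" using inj_unit_code by (simp add: inj_eq)
    then show "p = q" using hd seq_cons_hd_tl[of p] seq_cons_hd_tl[of q] by metis
  qed
  show "surj real_code"
  proof (rule surjI)
    fix y :: real
    have "0 \<le> y - \<lfloor>y\<rfloor>" "y - \<lfloor>y\<rfloor> < 1" by linarith+
    then show "real_code (seq_cons (int_encode \<lfloor>y\<rfloor>) (unit_decode (y - \<lfloor>y\<rfloor>))) = y"
      unfolding real_code_def by (simp add: unit_code_unit_decode)
  qed
qed

lemma real_code_lex_nbhd_bound:
  assumes "e > 0"
  obtains m where "real_code ` lex_nbhd q m \<subseteq> {real_code q..<real_code q + e}"
proof -
  obtain m where m: "\<And>p. p \<in> lex_nbhd (seq_tl q) m \<Longrightarrow> unit_code p < unit_code (seq_tl q) + e"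
    using unit_code_lex_nbhd_bound[OF assms] by blast
  have "real_code p \<in> {real_code q..<real_code q + e}" if "p \<in> lex_nbhd q (Suc m)" for p
  proof -
    have "p 0 = q 0" "seq_tl p \<in> lex_nbhd (seq_tl q) m"
      using that by (simp_all add: mem_lex_nbhd_Suc_iff)
    then show ?thesis
      using m[of "seq_tl p"] unit_code_mono_lex_nbhd[of "seq_tl p" "seq_tl q" m]
      unfolding real_code_def by simp
  qed
  then show ?thesis by (intro that[of "Suc m"] image_subsetI)
qed

lemma real_code_interval_subset_image:
  "\<exists>e>0. {real_code p..<real_code p + e} \<subseteq> real_code ` lex_nbhd p m"
proof -
  obtain e where "e > 0" and e: "{unit_code (seq_tl p)..<unit_code (seq_tl p) + e}
      \<subseteq> unit_code ` lex_nbhd (seq_tl p) m"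
    using unit_code_interval_subset_image[of "seq_tl p" m] by blast
  have "{real_code p..<real_code p + e} \<subseteq> real_code ` lex_nbhd p (Suc m)"
  proof
    fix y assume "y \<in> {real_code p..<real_code p + e}"
    then have "y - int_decode (p 0) \<in> {unit_code (seq_tl p)..<unit_code (seq_tl p) + e}"
      unfolding real_code_def atLeastLessThan_iff by linarith
    with e obtain r where r: "r \<in> lex_nbhd (seq_tl p) m" "unit_code r = y - int_decode (p 0)"
      by (metis subsetD imageE)
    then have "seq_cons (p 0) r \<in> lex_nbhd p (Suc m)" by (simp add: mem_lex_nbhd_Suc_iff)
    moreover have "real_code (seq_cons (p 0) r) = y" using r by (simp add: real_code_def)
    ultimately show "y \<in> real_code ` lex_nbhd p (Suc m)" by force
  qed
  also have "\<dots> \<subseteq> real_code ` lex_nbhd p m" by (intro image_mono lex_nbhd_antimono) simp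
  finally show ?thesis using \<open>e > 0\<close> by blast
qed

lemma homeomorphic_map_real_code: "homeomorphic_map lex_sorgenfrey sorgenfrey_line real_code"
  unfolding homeomorphic_map_lex_sorgenfrey_iff image_nbhd_base_def
proof (intro conjI allI impI)
  show "bij_betw real_code UNIV (topspace sorgenfrey_line)" using bij_real_code by simp
  fix q m
  show "openin sorgenfrey_line (real_code ` lex_nbhd q m)"
    unfolding openin_sorgenfrey_line
  proof
    fix y assume "y \<in> real_code ` lex_nbhd q m"
    then obtain p where p: "p \<in> lex_nbhd q m" "y = real_code p" by blast
    then show "\<exists>e>0. {y..<y+e} \<subseteq> real_code ` lex_nbhd q m"
      using real_code_interval_subset_image[of p m] lex_nbhd_subset[OF p(1)] by blast
  qed
next
  fix q U assume "openin sorgenfrey_line U \<and> real_code q \<in> U"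
  then obtain e where "e > 0" "{real_code q..<real_code q + e} \<subseteq> U"
    unfolding openin_sorgenfrey_line by blast
  moreover obtain m where "real_code ` lex_nbhd q m \<subseteq> {real_code q..<real_code q + e}"
    using real_code_lex_nbhd_bound[OF \<open>e > 0\<close>] .
  ultimately show "\<exists>m. real_code ` lex_nbhd q m \<subseteq> U" by blast
qed

theorem mainTheorem10:
  shows "Hausdorff_space sorgenfrey_line \<and>
    (\<exists>V. sorgenfrey_base sorgenfrey_line V \<and> locally_strict V \<and> strict_branches V) \<and>
    (\<forall>X :: 'a topology. Hausdorff_space X \<and>
       (\<exists>V. sorgenfrey_base X V \<and> locally_strict V \<and> strict_branches V) \<longrightarrow>
       X homeomorphic_space sorgenfrey_line)"
proof (intro conjI allI impI)
  show "Hausdorff_space sorgenfrey_line" by (rule Hausdorff_space_sorgenfrey_line)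
  show "\<exists>V. sorgenfrey_base sorgenfrey_line V \<and> locally_strict V \<and> strict_branches V"
    using homeomorphic_map_imp_sorgenfrey_base[OF homeomorphic_map_real_code] by blast
  fix X :: "'a topology"
  assume "Hausdorff_space X \<and> (\<exists>V. sorgenfrey_base X V \<and> locally_strict V \<and> strict_branches V)"
  then obtain V where "sorgenfrey_base X V" "locally_strict V" "strict_branches V" by blast
  then have "lex_sorgenfrey homeomorphic_space X" by (rule lex_sorgenfrey_homeomorphic_space)
  moreover have "lex_sorgenfrey homeomorphic_space sorgenfrey_line"
    using homeomorphic_map_real_code by (rule homeomorphic_map_imp_homeomorphic_space)
  ultimately show "X homeomorphic_space sorgenfrey_line"
    using homeomorphic_space_sym homeomorphic_space_trans by blast
qed

end
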